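(* Let $\Sigma_1$ and $\Sigma_2$ be connected graphs (multiple edges allowed, no loops) with $n$ vertices each containing exactly one cycle. If $\overline{\Sigma_1^*}\cong\overline{\Sigma_2^*}$, then either $\Sigma_1\cong\Sigma_2$, or $\{\Sigma_1,\Sigma_2\}$ is one of the following two pairs of graphs on vertices $a,b,c,d$: (i) the graph with a double edge $ab$ and edges $ac$, $ad$, together with the graph consisting of a triangle $abc$ and the edge $cd$; (ii) the graph with a double edge $ab$ and edges $ac$, $bd$, together with the 4-cycle $abcd$.
   Context: A cycle may consist of two vertices joined by two parallel edges. For such a graph $\Sigma$, the dual graph $\Sigma^*$ has as vertices the edges of $\Sigma$; two vertices are joined by an edge if the corresponding edges have a common endpoint, except that if two edges of $\Sigma$ form a cycle (i.e., are parallel edges), the corresponding vertices of $\Sigma^*$ are joined by a dotted edge. $\overline{\Sigma^*}$ denotes $\Sigma^*$ with the dotted edge removed (if there is one), and $\overline{\Sigma^*}=\Sigma^*$ otherwise. *)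

theory Defs
  imports Main
begin

text \<open>Parallel edges are distinct edges e, e' with I e = I e'.\<close>

definition multigraph :: "'v set \<Rightarrow> 'e set \<Rightarrow> ('e \<Rightarrow> 'v set) \<Rightarrow> bool" where
  "multigraph V E I \<longleftrightarrow> finite V \<and> finite E \<and> (\<forall>e\<in>E. I e \<subseteq> V \<and> card (I e) = 2)"

definition adj_rel :: "'e set \<Rightarrow> ('e \<Rightarrow> 'v set) \<Rightarrow> ('v \<times> 'v) set" where
  "adj_rel E I = {(u, v). \<exists>e\<in>E. I e = {u, v}}"

definition mg_connected :: "'v set \<Rightarrow> 'e set \<Rightarrow> ('e \<Rightarrow> 'v set) \<Rightarrow> bool" where
  "mg_connected V E I \<longleftrightarrow> (\<forall>u\<in>V. \<forall>v\<in>V. (u, v) \<in> (adj_rel E I)\<^sup>*)"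

text \<open>A cycle (as a subgraph, given by its edge set): a nonempty set C of edges whose
  spanned subgraph is connected and in which every vertex has degree exactly 2.
  Two parallel edges form a cycle of length 2.\<close>

definition is_cycle :: "'e set \<Rightarrow> ('e \<Rightarrow> 'v set) \<Rightarrow> 'e set \<Rightarrow> bool" where
  "is_cycle E I C \<longleftrightarrow> C \<subseteq> E \<and> C \<noteq> {} \<and>
     mg_connected (\<Union>(I ` C)) C I \<and>
     (\<forall>v\<in>\<Union>(I ` C). card {e\<in>C. v \<in> I e} = 2)"

definition unique_cycle :: "'e set \<Rightarrow> ('e \<Rightarrow> 'v set) \<Rightarrow> bool" where
  "unique_cycle E I \<longleftrightarrow> (\<exists>!C. is_cycle E I C)"

text \<open>Adjacency in the dual graph with the dotted edge removed: distinct edges with a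
  common endpoint which are not parallel.\<close>

definition dual_bar_adj :: "('e \<Rightarrow> 'v set) \<Rightarrow> 'e \<Rightarrow> 'e \<Rightarrow> bool" where
  "dual_bar_adj I e e' \<longleftrightarrow> e \<noteq> e' \<and> I e \<inter> I e' \<noteq> {} \<and> I e \<noteq> I e'"

definition dual_bar_iso :: "'e1 set \<Rightarrow> ('e1 \<Rightarrow> 'v1 set) \<Rightarrow> 'e2 set \<Rightarrow> ('e2 \<Rightarrow> 'v2 set) \<Rightarrow> bool" where
  "dual_bar_iso E1 I1 E2 I2 \<longleftrightarrow> (\<exists>g. bij_betw g E1 E2 \<and>
     (\<forall>e\<in>E1. \<forall>e'\<in>E1. dual_bar_adj I1 e e' \<longleftrightarrow> dual_bar_adj I2 (g e) (g e')))"

definition mg_iso :: "'v1 set \<Rightarrow> 'e1 set \<Rightarrow> ('e1 \<Rightarrow> 'v1 set) \<Rightarrow>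
                      'v2 set \<Rightarrow> 'e2 set \<Rightarrow> ('e2 \<Rightarrow> 'v2 set) \<Rightarrow> bool" where
  "mg_iso V1 E1 I1 V2 E2 I2 \<longleftrightarrow> (\<exists>f g. bij_betw f V1 V2 \<and> bij_betw g E1 E2 \<and>
     (\<forall>e\<in>E1. I2 (g e) = f ` I1 e))"

text \<open>The exceptional graphs, on vertices a,b,c,d = 0,1,2,3 with edges 0,1,2,3.\<close>

definition exV :: "nat set" where "exV = {0, 1, 2, 3}"
definition exE :: "nat set" where "exE = {0, 1, 2, 3}"

definition exA1 :: "nat \<Rightarrow> nat set" where
  "exA1 e = (if e = 0 then {0, 1} else if e = 1 then {0, 1} else if e = 2 then {0, 2} else {0, 3})"
definition exB1 :: "nat \<Rightarrow> nat set" where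
  "exB1 e = (if e = 0 then {0, 1} else if e = 1 then {1, 2} else if e = 2 then {0, 2} else {2, 3})"
definition exA2 :: "nat \<Rightarrow> nat set" where
  "exA2 e = (if e = 0 then {0, 1} else if e = 1 then {0, 1} else if e = 2 then {0, 2} else {1, 3})"
definition exB2 :: "nat \<Rightarrow> nat set" where
  "exB2 e = (if e = 0 then {0, 1} else if e = 1 then {1, 2} else if e = 2 then {2, 3} else {3, 0})"

end

theory Submission
  imports Defs
begin

(* For n >= 3 and n ~= 4 we follow Whitney's proof for line graphs: the isomorphism g of the
   duals maps every star onto a star. Two distinct edges are parallel iff they are non-adjacent
   twins in the dual (disjoint twins force n = 4), so g preserves parallelism and hence the
   relation of sharing an endpoint. Three edges at a vertex cannot be sent to a triangle: the
   triangle would be the unique cycle, so every other edge meets none or two of its edges,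
   whereas some edge leaving the four vertices of the claw meets one or three claw edges.
   A Helly property of 2-sets then puts the image of every star into a star. A star contained
   in no other star is mapped onto a star (apply the same to the inverse of g); a star contained
   in another one is a class of parallel edges, and its image is the star at an endpoint of the
   image edge. For n = 2 there is nothing to do, and the five unicyclic multigraphs on four
   vertices are told apart by the number of dual vertices adjacent to all others (2, 2, 1, 0, 0),
   which leaves exactly the two exceptional pairs. *)

section \<open>Stars, 2-sets and short cycles\<close>

definition star :: "'e set \<Rightarrow> ('e \<Rightarrow> 'v set) \<Rightarrow> 'v \<Rightarrow> 'e set" where
  "star E I v = {e\<in>E. v \<in> I e}"

definition parallel_class :: "'e set \<Rightarrow> ('e \<Rightarrow> 'v set) \<Rightarrow> 'e \<Rightarrow> 'e set" where
  "parallel_class E I e = {e'\<in>E. I e' = I e}"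

definition dual_nbrs :: "'e set \<Rightarrow> ('e \<Rightarrow> 'v set) \<Rightarrow> 'e \<Rightarrow> 'e set" where
  "dual_nbrs E I e = {e'\<in>E. dual_bar_adj I e e'}"

definition dominated :: "'e set \<Rightarrow> ('e \<Rightarrow> 'v set) \<Rightarrow> 'v \<Rightarrow> bool" where
  "dominated E I v \<longleftrightarrow> (\<exists>x. x \<noteq> v \<and> star E I v \<subseteq> star E I x)"

lemma star_subset: "star E I v \<subseteq> E"
  unfolding star_def by auto

lemma card_2_eq_doubleton:
  assumes "card A = 2" "a \<in> A" "b \<in> A" "a \<noteq> b"
  shows "A = {a, b}"
  using assms by (auto simp: card_2_iff)

lemma doubletons_common_point:
  assumes "F \<noteq> {}" "\<And>A. A \<in> F \<Longrightarrow> card A = 2"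
    and "\<And>A B C. A \<in> F \<Longrightarrow> B \<in> F \<Longrightarrow> C \<in> F \<Longrightarrow> A \<inter> B \<inter> C \<noteq> {}"
  shows "\<Inter>F \<noteq> {}"
proof
  assume empty: "\<Inter>F = {}"
  obtain A where A: "A \<in> F" using assms(1) by blast
  then obtain a b where ab: "A = {a, b}" using assms(2) by (meson card_2_iff)
  obtain B where "B \<in> F" "a \<notin> B" using empty by blast
  moreover obtain C where "C \<in> F" "b \<notin> C" using empty by blast
  ultimately show False using assms(3)[OF A] ab by blast
qed

lemma triangle_of_doubletons:
  assumes "card A = 2" "card B = 2" "card C = 2"
    and "A \<inter> B \<noteq> {}" "B \<inter> C \<noteq> {}" "A \<inter> C \<noteq> {}" "A \<inter> B \<inter> C = {}"
  obtains a b c where "distinct [a, b, c]" "A = {a, b}" "B = {b, c}" "C = {c, a}"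
proof -
  obtain b where "b \<in> A" "b \<in> B" using assms(4) by blast
  moreover obtain a where "a \<in> A" "a \<in> C" using assms(6) by blast
  moreover obtain c where "c \<in> B" "c \<in> C" using assms(5) by blast
  moreover from calculation have "distinct [a, b, c]" using assms(7) by auto
  ultimately show thesis
    using that assms(1-3) card_2_eq_doubleton by (metis distinct_length_2_or_more insert_commute)
qed

lemma obtain_doubleton_other:
  assumes "x \<in> {a, b}"
  obtains y where "{a, b} = {y, x}"
  using assms that[of b] that[of a] by (auto simp: insert_commute)

lemma is_cycle_parallel_pair:
  assumes "e \<in> E" "e' \<in> E" "e \<noteq> e'" "a \<noteq> b" "I e = {a, b}" "I e' = {a, b}"
  shows "is_cycle E I {e, e'}"
proof -
  have "(a, b) \<in> adj_rel {e, e'} I" "(b, a) \<in> adj_rel {e, e'} I"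
    unfolding adj_rel_def using assms by auto
  then have "mg_connected {a, b} {e, e'} I"
    unfolding mg_connected_def by blast
  moreover have "{x \<in> {e, e'}. v \<in> I x} = {e, e'}" if "v \<in> {a, b}" for v
    using that assms by auto
  ultimately show ?thesis
    using assms unfolding is_cycle_def by auto
qed

lemma is_cycle_triangle:
  assumes "x \<in> E" "y \<in> E" "z \<in> E" "distinct [a, b, c]"
    and "I x = {a, b}" "I y = {b, c}" "I z = {c, a}"
  shows "is_cycle E I {x, y, z}"
proof -
  have xyz: "distinct [x, y, z]" using assms by (auto simp: doubleton_eq_iff)
  let ?R = "adj_rel {x, y, z} I"
  have "(a, b) \<in> ?R" "(b, a) \<in> ?R" "(b, c) \<in> ?R" "(c, b) \<in> ?R" "(a, c) \<in> ?R" "(c, a) \<in> ?R"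
    unfolding adj_rel_def using assms by auto
  then have "mg_connected {a, b, c} {x, y, z} I"
    unfolding mg_connected_def by blast
  moreover have "{e \<in> {x, y, z}. a \<in> I e} = {x, z}" "{e \<in> {x, y, z}. b \<in> I e} = {x, y}"
    "{e \<in> {x, y, z}. c \<in> I e} = {y, z}" using assms by auto
  then have "\<forall>v\<in>{a, b, c}. card {e \<in> {x, y, z}. v \<in> I e} = 2"
    using xyz by auto
  moreover have "\<Union>(I ` {x, y, z}) = {a, b, c}" using assms by auto
  ultimately show ?thesis
    using assms unfolding is_cycle_def by simp
qed

lemma is_cycle_square:
  assumes "x \<in> E" "y \<in> E" "z \<in> E" "w \<in> E" "distinct [a, b, c, d]"
    and "I x = {a, b}" "I y = {b, c}" "I z = {c, d}" "I w = {d, a}"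
  shows "is_cycle E I {x, y, z, w}"
proof -
  have xyzw: "distinct [x, y, z, w]" using assms by (auto simp: doubleton_eq_iff)
  let ?R = "adj_rel {x, y, z, w} I"
  have R: "(a, b) \<in> ?R" "(b, a) \<in> ?R" "(b, c) \<in> ?R" "(c, b) \<in> ?R"
    "(c, d) \<in> ?R" "(d, c) \<in> ?R" "(d, a) \<in> ?R" "(a, d) \<in> ?R"
    unfolding adj_rel_def using assms by auto
  have from_a: "(a, t) \<in> ?R\<^sup>*" and to_a: "(t, a) \<in> ?R\<^sup>*" if "t \<in> {a, b, c, d}" for t
    using that R by (auto intro: rtrancl_into_rtrancl converse_rtrancl_into_rtrancl)
  have "(u, v) \<in> ?R\<^sup>*" if "u \<in> {a, b, c, d}" "v \<in> {a, b, c, d}" for u v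
    using to_a[OF that(1)] from_a[OF that(2)] by (rule rtrancl_trans)
  then have "mg_connected {a, b, c, d} {x, y, z, w} I"
    unfolding mg_connected_def by blast
  moreover have "{e \<in> {x, y, z, w}. a \<in> I e} = {x, w}" "{e \<in> {x, y, z, w}. b \<in> I e} = {x, y}"
    "{e \<in> {x, y, z, w}. c \<in> I e} = {y, z}" "{e \<in> {x, y, z, w}. d \<in> I e} = {z, w}"
    using assms by auto
  then have "\<forall>v\<in>{a, b, c, d}. card {e \<in> {x, y, z, w}. v \<in> I e} = 2"
    using xyzw by auto
  moreover have "\<Union>(I ` {x, y, z, w}) = {a, b, c, d}" using assms by auto
  ultimately show ?thesis
    using assms unfolding is_cycle_def by simp
qed

lemma is_cycle_edges_at:
  assumes "is_cycle E I C" "x \<in> C" "v \<in> I x"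
  shows "card {e \<in> C. v \<in> I e} = 2"
  using assms unfolding is_cycle_def by blast

lemma is_cycle_other_edge_at:
  assumes "is_cycle E I C" "x \<in> C" "v \<in> I x"
  obtains y where "y \<in> C" "y \<noteq> x" "v \<in> I y"
proof -
  obtain u w where uw: "u \<noteq> w" "{e \<in> C. v \<in> I e} = {u, w}"
    using is_cycle_edges_at[OF assms] by (meson card_2_iff)
  then have "x \<in> {u, w}" using assms(2,3) by blast
  then show thesis using that uw by (metis (no_types, lifting) insertCI mem_Collect_eq)
qed

lemma is_cycle_no_three_edges_at:
  assumes "is_cycle E I C" "x \<in> C" "y \<in> C" "z \<in> C" "distinct [x, y, z]"
    and "v \<in> I x" "v \<in> I y" "v \<in> I z"
  shows False
proof -
  have two: "card {e \<in> C. v \<in> I e} = 2" using is_cycle_edges_at[OF assms(1,2,6)] .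
  then have "finite {e \<in> C. v \<in> I e}" by (intro card_ge_0_finite) simp
  moreover have "{x, y, z} \<subseteq> {e \<in> C. v \<in> I e}" using assms by auto
  ultimately have "card {x, y, z} \<le> 2" using card_mono two by metis
  then show False using assms(5) by simp
qed

section \<open>Connected and unicyclic multigraphs\<close>

locale connected_multigraph =
  fixes V :: "'v set" and E :: "'e set" and I :: "'e \<Rightarrow> 'v set"
  assumes multigraph: "multigraph V E I" and connected: "mg_connected V E I"
begin

lemma finite_V: "finite V"
  using multigraph unfolding multigraph_def by auto

lemma endpoints_subset: "e \<in> E \<Longrightarrow> I e \<subseteq> V"
  using multigraph unfolding multigraph_def by auto

lemma card_endpoints: "e \<in> E \<Longrightarrow> card (I e) = 2"
  using multigraph unfolding multigraph_def by auto

lemma obtain_endpoints: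
  assumes "e \<in> E"
  obtains a b where "a \<noteq> b" "I e = {a, b}"
  using card_endpoints[OF assms] by (meson card_2_iff)

lemma obtain_other_endpoint:
  assumes "e \<in> E" "v \<in> I e"
  obtains u where "u \<noteq> v" "I e = {v, u}"
  using obtain_endpoints[OF assms(1)] assms(2) by (metis insert_commute insertE singletonD)

lemma edge_closed_superset:
  assumes "u \<in> W" "u \<in> V" "\<And>e. e \<in> E \<Longrightarrow> I e \<inter> W \<noteq> {} \<Longrightarrow> I e \<subseteq> W"
  shows "V \<subseteq> W"
proof
  fix v assume "v \<in> V"
  then have "(u, v) \<in> (adj_rel E I)\<^sup>*"
    using connected assms(2) unfolding mg_connected_def by blast
  then show "v \<in> W"
  proof (induction rule: rtrancl_induct)
    case base
    then show ?case using assms(1) .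
  next
    case (step y z)
    then obtain e where "e \<in> E" "I e = {y, z}" unfolding adj_rel_def by auto
    then show ?case using step assms(3)[of e] by auto
  qed
qed

lemma obtain_edge_leaving:
  assumes "u \<in> W" "u \<in> V" "\<not> V \<subseteq> W"
  obtains e p q where "e \<in> E" "I e = {p, q}" "p \<in> W" "q \<notin> W"
proof -
  obtain e where e: "e \<in> E" "I e \<inter> W \<noteq> {}" "\<not> I e \<subseteq> W"
    using edge_closed_superset assms by blast
  obtain p q where pq: "I e = {p, q}" using obtain_endpoints[OF e(1)] .
  show thesis
  proof (cases "p \<in> W")
    case True
    then show thesis using that[of e p q] e pq by auto
  next
    case False
    then show thesis using that[of e q p] e pq by (auto simp: insert_commute)
  qed
qed

lemma star_nonempty:
  assumes "card V \<ge> 2" "v \<in> V"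
  shows "star E I v \<noteq> {}"
proof
  assume "star E I v = {}"
  then have "V \<subseteq> {v}"
    using assms(2) by (intro edge_closed_superset[of v]) (auto simp: star_def)
  then have "card V \<le> card {v}" by (intro card_mono) auto
  then show False using assms(1) by simp
qed

lemma obtain_edge_at:
  assumes "card V \<ge> 2" "v \<in> V"
  obtains e u where "e \<in> E" "u \<noteq> v" "I e = {v, u}" "u \<in> V"
proof -
  obtain e where "e \<in> star E I v" using star_nonempty[OF assms] by blast
  then have e: "e \<in> E" "v \<in> I e" unfolding star_def by auto
  then obtain u where "u \<noteq> v" "I e = {v, u}" by (rule obtain_other_endpoint)
  moreover have "u \<in> V" using endpoints_subset[OF e(1)] calculation by auto
  ultimately show thesis using that e(1) by blast
qed

lemma claw_leaving_edge:
  assumes "card V \<noteq> 4" "x \<in> E" "y \<in> E" "z \<in> E" "distinct [v, a, b, c]"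
    and "I x = {v, a}" "I y = {v, b}" "I z = {v, c}"
  obtains e p q where "e \<in> E" "e \<notin> {x, y, z}" "I e = {p, q}"
    "p \<in> {v, a, b, c}" "q \<notin> {v, a, b, c}"
proof -
  let ?W = "{v, a, b, c}"
  have "?W \<subseteq> V"
    using endpoints_subset[OF assms(2)] endpoints_subset[OF assms(3)] endpoints_subset[OF assms(4)]
      assms(6-8) by auto
  have "\<not> V \<subseteq> ?W"
  proof
    assume "V \<subseteq> ?W"
    then have "V = ?W" using \<open>?W \<subseteq> V\<close> by (rule subset_antisym)
    then show False using assms(1) distinct_card[OF assms(5)] by simp
  qed
  then obtain e p q where "e \<in> E" "I e = {p, q}" "p \<in> ?W" "q \<notin> ?W"
    using obtain_edge_leaving[of v ?W] \<open>?W \<subseteq> V\<close> by auto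
  moreover have "e \<notin> {x, y, z}" using calculation assms(6-8) by auto
  ultimately show thesis using that by blast
qed

lemma inj_on_star:
  assumes "card V \<ge> 3"
  shows "inj_on (star E I) V"
proof
  fix u v assume uv: "u \<in> V" "v \<in> V" "star E I u = star E I v"
  show "u = v"
  proof (rule ccontr)
    assume "u \<noteq> v"
    have "V \<subseteq> {u, v}"
    proof (rule edge_closed_superset[of u])
      fix e assume e: "e \<in> E" "I e \<inter> {u, v} \<noteq> {}"
      then have "u \<in> I e" "v \<in> I e" using uv(3) unfolding star_def by blast+
      then have "I e = {u, v}"
        using card_2_eq_doubleton[OF card_endpoints[OF e(1)]] \<open>u \<noteq> v\<close> by blast
      then show "I e \<subseteq> {u, v}" by simp
    qed (use uv in auto)
    then have "card V \<le> card {u, v}" by (intro card_mono) auto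
    then show False using assms \<open>u \<noteq> v\<close> by simp
  qed
qed

lemma dominated_star_eq_parallel_class:
  assumes "x \<noteq> v" "star E I v \<subseteq> star E I x" "e \<in> star E I v"
  shows "star E I v = parallel_class E I e"
proof -
  have endpoints: "I e' = {v, x}" if "e' \<in> star E I v" for e'
  proof -
    have "e' \<in> E" "v \<in> I e'" "x \<in> I e'" using that assms(2) unfolding star_def by auto
    then show ?thesis using card_2_eq_doubleton card_endpoints assms(1) by metis
  qed
  show ?thesis
  proof
    show "star E I v \<subseteq> parallel_class E I e"
      using endpoints assms(3) unfolding parallel_class_def star_def by blast
    show "parallel_class E I e \<subseteq> star E I v"
      using assms(3) unfolding parallel_class_def star_def by blast
  qed
qed

lemma card_4_if_disjoint_dual_twins:
  assumes "e \<in> E" "e' \<in> E" "I e \<inter> I e' = {}" "dual_nbrs E I e = dual_nbrs E I e'"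
  shows "card V = 4"
proof -
  have meets_both: "I x \<inter> I e \<noteq> {} \<and> I x \<inter> I e' \<noteq> {}"
    if "x \<in> E" "I x \<inter> (I e \<union> I e') \<noteq> {}" "I x \<noteq> I e" "I x \<noteq> I e'" for x
  proof -
    have "x \<in> dual_nbrs E I e \<longleftrightarrow> I x \<inter> I e \<noteq> {}" "x \<in> dual_nbrs E I e' \<longleftrightarrow> I x \<inter> I e' \<noteq> {}"
      using that unfolding dual_nbrs_def dual_bar_adj_def by blast+
    then show ?thesis using assms(4) that(2) by blast
  qed
  obtain a b where ab: "a \<noteq> b" "I e = {a, b}" using obtain_endpoints[OF assms(1)] .
  have "V \<subseteq> I e \<union> I e'"
  proof (rule edge_closed_superset[of a])
    show "a \<in> I e \<union> I e'" "a \<in> V" using ab endpoints_subset[OF assms(1)] by auto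
  next
    fix x assume x: "x \<in> E" "I x \<inter> (I e \<union> I e') \<noteq> {}"
    show "I x \<subseteq> I e \<union> I e'"
    proof (cases "I x = I e \<or> I x = I e'")
      case True
      then show ?thesis by blast
    next
      case False
      then have "I x \<inter> I e \<noteq> {}" "I x \<inter> I e' \<noteq> {}"
        using meets_both[OF x] by simp_all
      moreover obtain p q where "I x = {p, q}" using obtain_endpoints[OF x(1)] .
      ultimately show ?thesis using assms(3) by auto
    qed
  qed
  then have "V = I e \<union> I e'"
    using endpoints_subset[OF assms(1)] endpoints_subset[OF assms(2)] by blast
  moreover have "finite (I e)" "finite (I e')"
    using card_endpoints assms(1,2) by (auto intro: card_ge_0_finite)
  then have "card (I e \<union> I e') = card (I e) + card (I e')"
    using assms(3) by (rule card_Un_disjoint)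
  then have "card (I e \<union> I e') = 4"
    using card_endpoints assms(1,2) by simp
  ultimately show ?thesis by simp
qed

lemma parallel_iff_dual_twins:
  assumes "card V \<noteq> 4" "e \<in> E" "e' \<in> E" "e \<noteq> e'"
  shows "I e = I e' \<longleftrightarrow> \<not> dual_bar_adj I e e' \<and> dual_nbrs E I e = dual_nbrs E I e'"
proof
  assume "I e = I e'"
  then show "\<not> dual_bar_adj I e e' \<and> dual_nbrs E I e = dual_nbrs E I e'"
    unfolding dual_nbrs_def dual_bar_adj_def by auto
next
  assume twins: "\<not> dual_bar_adj I e e' \<and> dual_nbrs E I e = dual_nbrs E I e'"
  then have "I e \<inter> I e' \<noteq> {}"
    using card_4_if_disjoint_dual_twins assms by blast
  then show "I e = I e'"
    using twins assms(4) unfolding dual_bar_adj_def by blast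
qed

end

locale unicyclic_multigraph = connected_multigraph +
  assumes unique_cycle: "unique_cycle E I"
begin

lemma cycle_unique: "is_cycle E I C \<Longrightarrow> is_cycle E I C' \<Longrightarrow> C = C'"
  using unique_cycle unfolding unique_cycle_def by blast

lemma card_V_ge_2: "card V \<ge> 2"
proof -
  obtain C where "is_cycle E I C" using unique_cycle unfolding unique_cycle_def by blast
  then obtain e where e: "e \<in> E" unfolding is_cycle_def by blast
  then have "card (I e) \<le> card V" using endpoints_subset finite_V by (intro card_mono)
  then show ?thesis using card_endpoints[OF e] by simp
qed

lemma cycle_eq_parallel_pair:
  assumes "is_cycle E I C" "u \<in> E" "t \<in> E" "u \<noteq> t" "I u = I t"
  shows "C = {u, t}"
proof -
  obtain a b where "a \<noteq> b" "I u = {a, b}" using obtain_endpoints[OF assms(2)] .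
  then have "is_cycle E I {u, t}" using is_cycle_parallel_pair[OF assms(2-4)] assms(5) by simp
  then show ?thesis using cycle_unique assms(1) by blast
qed

lemma parallel_edge_eq:
  assumes "is_cycle E I C" "u \<in> E" "t \<in> E" "I u = I t" "t \<notin> C \<or> card C \<noteq> 2"
  shows "u = t"
proof (rule ccontr)
  assume "u \<noteq> t"
  then have "C = {u, t}" using cycle_eq_parallel_pair[OF assms(1-3) _ assms(4)] by blast
  then show False using assms(5) \<open>u \<noteq> t\<close> by simp
qed

lemma no_edge_meets_triangle:
  assumes "x \<in> E" "y \<in> E" "z \<in> E" "distinct [a, b, c]"
    and "I x = {a, b}" "I y = {b, c}" "I z = {c, a}"
    and "e \<in> E" "e \<notin> {x, y, z}"
  shows "\<not> (I e \<inter> I x \<noteq> {} \<and> I e \<inter> I y \<noteq> {} \<and> I e \<inter> I z \<noteq> {})"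
proof
  assume meets: "I e \<inter> I x \<noteq> {} \<and> I e \<inter> I y \<noteq> {} \<and> I e \<inter> I z \<noteq> {}"
  obtain p q where "p \<noteq> q" "I e = {p, q}" using obtain_endpoints[OF assms(8)] .
  then have "I e = I x \<or> I e = I y \<or> I e = I z"
    using meets assms(4-7) by auto
  then obtain t where t: "t \<in> {x, y, z}" "I e = I t" by blast
  then have "t \<in> E" "e \<noteq> t" using assms(1-3,9) by auto
  then have "{x, y, z} = {e, t}"
    using cycle_eq_parallel_pair[OF is_cycle_triangle[OF assms(1-7)] assms(8)] t(2) by blast
  then show False using assms(9) by auto
qed

lemma triangle_meets_exactly_two:
  assumes "x \<in> E" "y \<in> E" "z \<in> E" "distinct [a, b, c]"
    and "I x = {a, b}" "I y = {b, c}" "I z = {c, a}"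
    and "e \<in> E" "e \<notin> {x, y, z}" "I e \<inter> I x \<noteq> {}"
  shows "(I e \<inter> I y \<noteq> {}) \<noteq> (I e \<inter> I z \<noteq> {})"
  using no_edge_meets_triangle[OF assms(1-9)] assms(5-7,10) by auto

end

section \<open>Dual isomorphisms map stars onto stars\<close>

locale unicyclic_dual_iso =
  G1: unicyclic_multigraph V1 E1 I1 + G2: unicyclic_multigraph V2 E2 I2
  for V1 :: "'v1 set" and E1 :: "'e1 set" and I1 :: "'e1 \<Rightarrow> 'v1 set"
    and V2 :: "'v2 set" and E2 :: "'e2 set" and I2 :: "'e2 \<Rightarrow> 'v2 set" +
  fixes g :: "'e1 \<Rightarrow> 'e2"
  assumes bij: "bij_betw g E1 E2"
    and dual_adj: "\<And>e e'. e \<in> E1 \<Longrightarrow> e' \<in> E1 \<Longrightarrow>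
      dual_bar_adj I1 e e' \<longleftrightarrow> dual_bar_adj I2 (g e) (g e')"
    and card_eq: "card V1 = card V2"
    and card_ge_3: "card V1 \<ge> 3"
    and card_neq_4: "card V1 \<noteq> 4"
begin

lemma inj_g: "inj_on g E1"
  using bij by (rule bij_betw_imp_inj_on)

lemma g_in: "e \<in> E1 \<Longrightarrow> g e \<in> E2"
  using bij by (rule bij_betw_apply)

lemma image_g: "g ` E1 = E2"
  using bij by (rule bij_betw_imp_surj_on)

lemma g_eq_iff: "e \<in> E1 \<Longrightarrow> e' \<in> E1 \<Longrightarrow> g e = g e' \<longleftrightarrow> e = e'"
  using inj_g by (auto dest: inj_onD)

lemma inverse: "unicyclic_dual_iso V2 E2 I2 V1 E1 I1 (the_inv_into E1 g)"
proof unfold_locales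
  show "bij_betw (the_inv_into E1 g) E2 E1"
    using bij by (rule bij_betw_the_inv_into)
  show "card V2 = card V1" "3 \<le> card V2" "card V2 \<noteq> 4"
    using card_eq card_ge_3 card_neq_4 by auto
  fix q q' assume "q \<in> E2" "q' \<in> E2"
  then show "dual_bar_adj I2 q q' \<longleftrightarrow> dual_bar_adj I1 (the_inv_into E1 g q) (the_inv_into E1 g q')"
    using dual_adj bij_betw_apply[OF bij_betw_the_inv_into[OF bij]] f_the_inv_into_f_bij_betw[OF bij]
    by metis
qed

lemma image_inv_image: "B \<subseteq> E2 \<Longrightarrow> g ` the_inv_into E1 g ` B = B"
  using f_the_inv_into_f_bij_betw[OF bij] by (force simp: image_image)

lemma image_subset_image_iff:
  assumes "A \<subseteq> E1" "B \<subseteq> E1"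
  shows "g ` A \<subseteq> g ` B \<longleftrightarrow> A \<subseteq> B"
proof
  assume image_subset: "g ` A \<subseteq> g ` B"
  show "A \<subseteq> B"
  proof
    fix x assume "x \<in> A"
    then have "g x \<in> g ` B" using image_subset by blast
    then show "x \<in> B" using inj_on_image_mem_iff[OF inj_g] assms \<open>x \<in> A\<close> by blast
  qed
qed (rule image_mono)

lemma mem_image_star_iff: "e \<in> E1 \<Longrightarrow> g e \<in> g ` star E1 I1 v \<longleftrightarrow> e \<in> star E1 I1 v"
  using inj_on_image_mem_iff[OF inj_g _ star_subset] .

lemma dual_nbrs_image:
  assumes "e \<in> E1"
  shows "dual_nbrs E2 I2 (g e) = g ` dual_nbrs E1 I1 e"
proof -
  have "dual_nbrs E2 I2 (g e) = {q \<in> g ` E1. dual_bar_adj I2 (g e) q}"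
    unfolding dual_nbrs_def image_g ..
  also have "\<dots> = g ` dual_nbrs E1 I1 e"
    unfolding dual_nbrs_def using dual_adj[OF assms] by auto
  finally show ?thesis .
qed

lemma parallel_preserved:
  assumes "e \<in> E1" "e' \<in> E1"
  shows "I2 (g e) = I2 (g e') \<longleftrightarrow> I1 e = I1 e'"
proof (cases "e = e'")
  case False
  have "dual_nbrs E2 I2 (g e) = dual_nbrs E2 I2 (g e') \<longleftrightarrow> dual_nbrs E1 I1 e = dual_nbrs E1 I1 e'"
    unfolding dual_nbrs_image[OF assms(1)] dual_nbrs_image[OF assms(2)]
    by (rule inj_on_image_eq_iff[OF inj_g]) (auto simp: dual_nbrs_def)
  then show ?thesis
    using G1.parallel_iff_dual_twins[OF card_neq_4 assms False]
      G2.parallel_iff_dual_twins[OF card_neq_4[unfolded card_eq] g_in[OF assms(1)] g_in[OF assms(2)]]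
      False g_eq_iff[OF assms] dual_adj[OF assms] by blast
qed simp

lemma meets_preserved:
  assumes "e \<in> E1" "e' \<in> E1"
  shows "I2 (g e) \<inter> I2 (g e') \<noteq> {} \<longleftrightarrow> I1 e \<inter> I1 e' \<noteq> {}"
proof -
  have "I e \<inter> I e' \<noteq> {} \<longleftrightarrow> e = e' \<or> I e = I e' \<or> dual_bar_adj I e e'"
    if "card (I e) = 2" for I :: "'e \<Rightarrow> 'v set" and e e'
    using that unfolding dual_bar_adj_def by auto
  then show ?thesis
    using G1.card_endpoints[OF assms(1)] G2.card_endpoints[OF g_in[OF assms(1)]]
      parallel_preserved[OF assms] dual_adj[OF assms] g_eq_iff[OF assms] by metis
qed

lemma parallel_class_image:
  assumes "e \<in> E1"
  shows "g ` parallel_class E1 I1 e = parallel_class E2 I2 (g e)"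
proof -
  have "parallel_class E2 I2 (g e) = {q \<in> g ` E1. I2 q = I2 (g e)}"
    unfolding parallel_class_def image_g ..
  also have "\<dots> = g ` parallel_class E1 I1 e"
    unfolding parallel_class_def using parallel_preserved[OF _ assms] by auto
  finally show ?thesis by simp
qed

lemma image_triangle_meets_exactly_two:
  assumes "x \<in> E1" "y \<in> E1" "z \<in> E1" "e \<in> E1" "e \<notin> {x, y, z}" "distinct [a, b, c]"
    and "I2 (g x) = {a, b}" "I2 (g y) = {b, c}" "I2 (g z) = {c, a}"
    and "I1 e \<inter> I1 x \<noteq> {}"
  shows "(I1 e \<inter> I1 y \<noteq> {}) \<noteq> (I1 e \<inter> I1 z \<noteq> {})"
proof -
  have "g e \<notin> {g x, g y, g z}" using assms(1-5) g_eq_iff by auto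
  then show ?thesis
    using G2.triangle_meets_exactly_two[OF g_in[OF assms(1)] g_in[OF assms(2)] g_in[OF assms(3)]
        assms(6-9) g_in[OF assms(4)]]
      meets_preserved[OF assms(4)] assms(1-3,10) by blast
qed

lemma image_of_claw_not_triangle:
  assumes E: "x \<in> E1" "y \<in> E1" "z \<in> E1"
    and claw: "distinct [v, a, b, c]" "I1 x = {v, a}" "I1 y = {v, b}" "I1 z = {v, c}"
    and tri: "distinct [a', b', c']" "I2 (g x) = {a', b'}" "I2 (g y) = {b', c'}" "I2 (g z) = {c', a'}"
  shows False
proof -
  obtain e p q where e: "e \<in> E1" "e \<notin> {x, y, z}" "I1 e = {p, q}"
    "p \<in> {v, a, b, c}" "q \<notin> {v, a, b, c}"
    using G1.claw_leaving_edge[OF card_neq_4 E claw] .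
  have meets: "I1 e \<inter> I1 x \<noteq> {} \<longleftrightarrow> p \<in> {v, a}" "I1 e \<inter> I1 y \<noteq> {} \<longleftrightarrow> p \<in> {v, b}"
    "I1 e \<inter> I1 z \<noteq> {} \<longleftrightarrow> p \<in> {v, c}"
    using e(3,5) claw(2-4) by auto
  have "e \<notin> {y, z, x}" "e \<notin> {z, x, y}" using e(2) by auto
  have rotated: "distinct [b', c', a']" "distinct [c', a', b']" using tri(1) by auto
  from e(4) consider "p = v" | "p = a" | "p = b" | "p = c" by blast
  then show False
  proof cases
    case 1
    then show False using image_triangle_meets_exactly_two[OF E e(1,2) tri] meets by simp
  next
    case 2
    then show False using image_triangle_meets_exactly_two[OF E e(1,2) tri] meets claw(1) by auto
  next
    case 3
    then show False
      using image_triangle_meets_exactly_two[OF E(2,3,1) e(1) \<open>e \<notin> {y, z, x}\<close> rotated(1) tri(3,4,2)] meets claw(1)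
      by auto
  next
    case 4
    then show False
      using image_triangle_meets_exactly_two[OF E(3,1,2) e(1) \<open>e \<notin> {z, x, y}\<close> rotated(2) tri(4,2,3)] meets claw(1)
      by auto
  qed
qed

lemma star_image_triples_meet:
  assumes "x \<in> star E1 I1 v" "y \<in> star E1 I1 v" "z \<in> star E1 I1 v"
  shows "I2 (g x) \<inter> I2 (g y) \<inter> I2 (g z) \<noteq> {}"
proof
  assume empty: "I2 (g x) \<inter> I2 (g y) \<inter> I2 (g z) = {}"
  have E: "x \<in> E1" "y \<in> E1" "z \<in> E1" and v: "v \<in> I1 x" "v \<in> I1 y" "v \<in> I1 z"
    using assms unfolding star_def by auto
  have "I2 (g x) \<inter> I2 (g y) \<noteq> {}" "I2 (g y) \<inter> I2 (g z) \<noteq> {}" "I2 (g x) \<inter> I2 (g z) \<noteq> {}"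
    using meets_preserved E v by blast+
  then obtain a' b' c' where tri: "distinct [a', b', c']"
    "I2 (g x) = {a', b'}" "I2 (g y) = {b', c'}" "I2 (g z) = {c', a'}"
    using triangle_of_doubletons[OF G2.card_endpoints[OF g_in[OF E(1)]]
        G2.card_endpoints[OF g_in[OF E(2)]] G2.card_endpoints[OF g_in[OF E(3)]] _ _ _ empty]
    by blast
  then have "I2 (g x) \<noteq> I2 (g y)" "I2 (g y) \<noteq> I2 (g z)" "I2 (g x) \<noteq> I2 (g z)"
    by (auto simp: doubleton_eq_iff)
  then have nonparallel: "I1 x \<noteq> I1 y" "I1 y \<noteq> I1 z" "I1 x \<noteq> I1 z"
    using parallel_preserved E by auto
  obtain a where a: "a \<noteq> v" "I1 x = {v, a}" using G1.obtain_other_endpoint[OF E(1) v(1)] .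
  obtain b where b: "b \<noteq> v" "I1 y = {v, b}" using G1.obtain_other_endpoint[OF E(2) v(2)] .
  obtain c where c: "c \<noteq> v" "I1 z = {v, c}" using G1.obtain_other_endpoint[OF E(3) v(3)] .
  have "distinct [v, a, b, c]" using a b c nonparallel by auto
  then show False using image_of_claw_not_triangle[OF E _ a(2) b(2) c(2) tri] by blast
qed

lemma image_star_subset_star:
  assumes "v \<in> V1"
  shows "\<exists>w\<in>V2. g ` star E1 I1 v \<subseteq> star E2 I2 w"
proof -
  let ?F = "(\<lambda>e. I2 (g e)) ` star E1 I1 v"
  have "star E1 I1 v \<noteq> {}" using G1.star_nonempty assms card_ge_3 by simp
  then obtain e where e: "e \<in> star E1 I1 v" by blast
  have "\<Inter>?F \<noteq> {}"
  proof (rule doubletons_common_point)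
    show "?F \<noteq> {}" using e by blast
    show "card A = 2" if "A \<in> ?F" for A
    proof -
      obtain x where "x \<in> star E1 I1 v" "A = I2 (g x)" using \<open>A \<in> ?F\<close> by blast
      then show ?thesis using G2.card_endpoints[OF g_in] unfolding star_def by auto
    qed
    show "A \<inter> B \<inter> C \<noteq> {}" if ABC: "A \<in> ?F" "B \<in> ?F" "C \<in> ?F" for A B C
    proof -
      obtain x y z where "x \<in> star E1 I1 v" "y \<in> star E1 I1 v" "z \<in> star E1 I1 v"
        "A = I2 (g x)" "B = I2 (g y)" "C = I2 (g z)"
        using ABC by blast
      then show ?thesis using star_image_triples_meet by simp
    qed
  qed
  then obtain w where w: "\<And>e. e \<in> star E1 I1 v \<Longrightarrow> w \<in> I2 (g e)" by blast
  have "e \<in> E1" using e unfolding star_def by simp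
  then have "w \<in> V2" using w[OF e] G2.endpoints_subset[OF g_in] by auto
  moreover have "g ` star E1 I1 v \<subseteq> star E2 I2 w"
    using w g_in unfolding star_def by auto
  ultimately show ?thesis by blast
qed

lemma star_subset_image_star:
  assumes "w \<in> V2"
  shows "\<exists>v\<in>V1. star E2 I2 w \<subseteq> g ` star E1 I1 v"
proof -
  interpret inv: unicyclic_dual_iso V2 E2 I2 V1 E1 I1 "the_inv_into E1 g"
    by (rule inverse)
  obtain v where v: "v \<in> V1" "the_inv_into E1 g ` star E2 I2 w \<subseteq> star E1 I1 v"
    using inv.image_star_subset_star[OF assms] by blast
  have "star E2 I2 w = g ` the_inv_into E1 g ` star E2 I2 w"
    using image_inv_image[OF star_subset, symmetric] .
  also have "\<dots> \<subseteq> g ` star E1 I1 v"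
    using v(2) by (rule image_mono)
  finally show ?thesis using v(1) by blast
qed

lemma image_star_undominated:
  assumes "v \<in> V1" "\<not> dominated E1 I1 v"
  shows "\<exists>w\<in>V2. g ` star E1 I1 v = star E2 I2 w"
proof -
  obtain w where w: "w \<in> V2" "g ` star E1 I1 v \<subseteq> star E2 I2 w"
    using image_star_subset_star[OF assms(1)] by blast
  obtain v' where v': "star E2 I2 w \<subseteq> g ` star E1 I1 v'"
    using star_subset_image_star[OF w(1)] by blast
  have "g ` star E1 I1 v \<subseteq> g ` star E1 I1 v'"
    using w(2) v' by (rule subset_trans)
  then have "star E1 I1 v \<subseteq> star E1 I1 v'"
    by (rule image_subset_image_iff[OF star_subset star_subset, THEN iffD1])
  then have "v' = v" using assms(2) unfolding dominated_def by blast
  then have "g ` star E1 I1 v = star E2 I2 w"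
    using w(2) v' by (intro subset_antisym) simp_all
  then show ?thesis using w(1) by blast
qed

lemma undominated_star_is_image:
  assumes "w \<in> V2" "\<not> dominated E2 I2 w"
  shows "\<exists>v\<in>V1. star E2 I2 w = g ` star E1 I1 v"
proof -
  interpret inv: unicyclic_dual_iso V2 E2 I2 V1 E1 I1 "the_inv_into E1 g"
    by (rule inverse)
  obtain v where v: "v \<in> V1" "the_inv_into E1 g ` star E2 I2 w = star E1 I1 v"
    using inv.image_star_undominated[OF assms] by blast
  have "star E2 I2 w = g ` the_inv_into E1 g ` star E2 I2 w"
    using image_inv_image[OF star_subset, symmetric] .
  also have "\<dots> = g ` star E1 I1 v"
    using v(2) by simp
  finally show ?thesis using v(1) by blast
qed

lemma endpoint_stars_of_image_edge:
  assumes "e \<in> E1" "w1 \<noteq> w2" "I2 (g e) = {w1, w2}"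
    and "\<not> dominated E2 I2 w1" "\<not> dominated E2 I2 w2"
  obtains x1 x2 where "I1 e = {x1, x2}"
    "g ` star E1 I1 x1 = star E2 I2 w1" "g ` star E1 I1 x2 = star E2 I2 w2"
proof -
  have wV: "w1 \<in> V2" "w2 \<in> V2" using G2.endpoints_subset[OF g_in[OF assms(1)]] assms(3) by auto
  obtain x1 x2 where x1: "star E2 I2 w1 = g ` star E1 I1 x1"
    and x2: "star E2 I2 w2 = g ` star E1 I1 x2"
    using undominated_star_is_image wV assms(4,5) by meson
  have "g e \<in> star E2 I2 w1" "g e \<in> star E2 I2 w2"
    using g_in[OF assms(1)] assms(3) unfolding star_def by auto
  then have "e \<in> star E1 I1 x1" "e \<in> star E1 I1 x2"
    using x1 x2 mem_image_star_iff[OF assms(1)] by simp_all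
  then have "x1 \<in> I1 e" "x2 \<in> I1 e" unfolding star_def by auto
  moreover have "x1 \<noteq> x2"
  proof
    assume "x1 = x2"
    then have "star E2 I2 w1 = star E2 I2 w2" using x1 x2 by simp
    moreover have "card V2 \<ge> 3" using card_ge_3 card_eq by simp
    ultimately show False using inj_onD[OF G2.inj_on_star _ wV] assms(2) by blast
  qed
  ultimately have "I1 e = {x1, x2}"
    using card_2_eq_doubleton[OF G1.card_endpoints[OF assms(1)]] by blast
  then show thesis using that x1 x2 by simp
qed

(* The star of v is a parallel class. If an endpoint of the image edge is dominated, its star is
   the image parallel class; otherwise the stars at both endpoints are images of the stars at the
   two endpoints of e, one of which is v. *)
lemma image_star_dominated:
  assumes "v \<in> V1" "dominated E1 I1 v"
  shows "\<exists>w\<in>V2. g ` star E1 I1 v = star E2 I2 w"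
proof -
  obtain x where x: "x \<noteq> v" "star E1 I1 v \<subseteq> star E1 I1 x"
    using assms(2) unfolding dominated_def by blast
  have "star E1 I1 v \<noteq> {}" using G1.star_nonempty assms(1) card_ge_3 by simp
  then obtain e where e: "e \<in> star E1 I1 v" by blast
  have star_v: "star E1 I1 v = parallel_class E1 I1 e"
    using G1.dominated_star_eq_parallel_class[OF x e] .
  have eE: "e \<in> E1" and "v \<in> I1 e" "x \<in> I1 e" using e x(2) unfolding star_def by auto
  then have Ie: "I1 e = {v, x}"
    using card_2_eq_doubleton[OF G1.card_endpoints[OF eE]] x(1) by simp
  obtain w1 w2 where w: "w1 \<noteq> w2" "I2 (g e) = {w1, w2}"
    using G2.obtain_endpoints[OF g_in[OF eE]] .
  have wV: "w1 \<in> V2" "w2 \<in> V2" using G2.endpoints_subset[OF g_in[OF eE]] w(2) by auto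
  have ge_star: "g e \<in> star E2 I2 w1" "g e \<in> star E2 I2 w2"
    using g_in[OF eE] w(2) unfolding star_def by auto
  show ?thesis
  proof (cases "dominated E2 I2 w1 \<or> dominated E2 I2 w2")
    case True
    then obtain w where w: "w \<in> V2" "g e \<in> star E2 I2 w" "dominated E2 I2 w"
      using wV ge_star by blast
    then obtain y where "y \<noteq> w" "star E2 I2 w \<subseteq> star E2 I2 y"
      unfolding dominated_def by blast
    then have "star E2 I2 w = parallel_class E2 I2 (g e)"
      using w(2) by (rule G2.dominated_star_eq_parallel_class)
    then have "g ` star E1 I1 v = star E2 I2 w"
      using star_v parallel_class_image[OF eE] by simp
    then show ?thesis using w(1) by blast
  next
    case False
    then obtain x1 x2 where "I1 e = {x1, x2}"
      "g ` star E1 I1 x1 = star E2 I2 w1" "g ` star E1 I1 x2 = star E2 I2 w2"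
      using endpoint_stars_of_image_edge[OF eE w] by blast
    moreover have "v \<in> {x1, x2}" using Ie calculation(1) by simp
    ultimately show ?thesis using wV by (cases "v = x1") auto
  qed
qed

lemma image_star:
  assumes "v \<in> V1"
  shows "\<exists>w\<in>V2. g ` star E1 I1 v = star E2 I2 w"
  using image_star_dominated[OF assms] image_star_undominated[OF assms] by blast

lemma obtain_vertex_bijection:
  obtains f where "bij_betw f V1 V2" "\<And>v. v \<in> V1 \<Longrightarrow> g ` star E1 I1 v = star E2 I2 (f v)"
proof -
  define f where "f v = (SOME w. w \<in> V2 \<and> g ` star E1 I1 v = star E2 I2 w)" for v
  have f: "f v \<in> V2" "g ` star E1 I1 v = star E2 I2 (f v)" if "v \<in> V1" for v
    using someI_ex[OF image_star[OF that, unfolded Bex_def]] unfolding f_def by blast+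
  have "inj_on f V1"
  proof
    fix u v assume uv: "u \<in> V1" "v \<in> V1" "f u = f v"
    then have "g ` star E1 I1 u = g ` star E1 I1 v" using f(2)[OF uv(1)] f(2)[OF uv(2)] by simp
    then have "star E1 I1 u = star E1 I1 v"
      by (rule inj_on_image_eq_iff[OF inj_g star_subset star_subset, THEN iffD1])
    then show "u = v" using inj_onD[OF G1.inj_on_star[OF card_ge_3] _ uv(1,2)] by blast
  qed
  moreover have "f ` V1 \<subseteq> V2" using f(1) by blast
  moreover have "card (f ` V1) = card V2" using card_image[OF \<open>inj_on f V1\<close>] card_eq by simp
  ultimately have "f ` V1 = V2" using card_subset_eq[OF G2.finite_V] by blast
  then have "bij_betw f V1 V2" using \<open>inj_on f V1\<close> unfolding bij_betw_def by blast
  then show thesis using that f(2) by blast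
qed

lemma mg_iso: "mg_iso V1 E1 I1 V2 E2 I2"
proof -
  obtain f where f: "bij_betw f V1 V2" "\<And>v. v \<in> V1 \<Longrightarrow> g ` star E1 I1 v = star E2 I2 (f v)"
    using obtain_vertex_bijection by blast
  have "I2 (g e) = f ` I1 e" if e: "e \<in> E1" for e
  proof (rule set_eqI)
    fix w
    show "w \<in> I2 (g e) \<longleftrightarrow> w \<in> f ` I1 e"
    proof (cases "w \<in> V2")
      case True
      then obtain u where u: "u \<in> V1" "w = f u" using bij_betw_imp_surj_on[OF f(1)] by blast
      have "w \<in> I2 (g e) \<longleftrightarrow> g e \<in> g ` star E1 I1 u"
        using f(2)[OF u(1)] u(2) g_in[OF e] unfolding star_def by auto
      also have "\<dots> \<longleftrightarrow> u \<in> I1 e"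
        using mem_image_star_iff[OF e] e unfolding star_def by simp
      also have "\<dots> \<longleftrightarrow> w \<in> f ` I1 e"
        using u G1.endpoints_subset[OF e] bij_betw_imp_inj_on[OF f(1)] by (auto dest: inj_onD)
      finally show ?thesis .
    next
      case False
      then show ?thesis
        using G2.endpoints_subset[OF g_in[OF e]] G1.endpoints_subset[OF e] bij_betw_apply[OF f(1)]
        by auto
    qed
  qed
  then show ?thesis unfolding mg_iso_def using f(1) bij by blast
qed

end

lemma mg_iso_sym:
  assumes "multigraph V1 E1 I1" "mg_iso V1 E1 I1 V2 E2 I2"
  shows "mg_iso V2 E2 I2 V1 E1 I1"
proof -
  obtain f g where fg: "bij_betw f V1 V2" "bij_betw g E1 E2" "\<And>e. e \<in> E1 \<Longrightarrow> I2 (g e) = f ` I1 e"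
    using assms(2) unfolding mg_iso_def by blast
  let ?f = "the_inv_into V1 f" and ?g = "the_inv_into E1 g"
  have "I1 (?g q) = ?f ` I2 q" if "q \<in> E2" for q
  proof -
    have gq: "?g q \<in> E1" "g (?g q) = q"
      using bij_betw_apply[OF bij_betw_the_inv_into[OF fg(2)] that]
        f_the_inv_into_f_bij_betw[OF fg(2) that] by simp_all
    have "I1 (?g q) \<subseteq> V1" using assms(1) gq(1) unfolding multigraph_def by blast
    then have "?f ` f ` I1 (?g q) = I1 (?g q)"
      using the_inv_into_f_f[OF bij_betw_imp_inj_on[OF fg(1)]] by (force simp: image_image)
    then show ?thesis using fg(3)[OF gq(1)] gq(2) by simp
  qed
  then show ?thesis
    unfolding mg_iso_def using bij_betw_the_inv_into[OF fg(1)] bij_betw_the_inv_into[OF fg(2)] by blast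
qed

lemma mg_iso_trans:
  assumes "mg_iso V1 E1 I1 V2 E2 I2" "mg_iso V2 E2 I2 V3 E3 I3"
  shows "mg_iso V1 E1 I1 V3 E3 I3"
proof -
  obtain f g where fg: "bij_betw f V1 V2" "bij_betw g E1 E2" "\<And>e. e \<in> E1 \<Longrightarrow> I2 (g e) = f ` I1 e"
    using assms(1) unfolding mg_iso_def by blast
  obtain f' g' where fg': "bij_betw f' V2 V3" "bij_betw g' E2 E3"
    "\<And>e. e \<in> E2 \<Longrightarrow> I3 (g' e) = f' ` I2 e"
    using assms(2) unfolding mg_iso_def by blast
  have "I3 ((g' \<circ> g) e) = (f' \<circ> f) ` I1 e" if "e \<in> E1" for e
    using fg(3)[OF that] fg'(3)[OF bij_betw_apply[OF fg(2) that]] by (simp add: image_comp)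
  then show ?thesis
    unfolding mg_iso_def using bij_betw_trans[OF fg(1) fg'(1)] bij_betw_trans[OF fg(2) fg'(2)] by blast
qed

lemma mg_iso_imp_dual_bar_iso:
  assumes "multigraph V1 E1 I1" "mg_iso V1 E1 I1 V2 E2 I2"
  shows "dual_bar_iso E1 I1 E2 I2"
proof -
  obtain f g where fg: "bij_betw f V1 V2" "bij_betw g E1 E2" "\<And>e. e \<in> E1 \<Longrightarrow> I2 (g e) = f ` I1 e"
    using assms(2) unfolding mg_iso_def by blast
  have inj_f: "inj_on f V1" and inj_g: "inj_on g E1"
    using fg(1,2) by (simp_all add: bij_betw_imp_inj_on)
  have "dual_bar_adj I1 e e' \<longleftrightarrow> dual_bar_adj I2 (g e) (g e')" if e: "e \<in> E1" "e' \<in> E1" for e e'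
  proof -
    have sub: "I1 e \<subseteq> V1" "I1 e' \<subseteq> V1" using assms(1) e unfolding multigraph_def by simp_all
    have "f ` I1 e \<inter> f ` I1 e' = f ` (I1 e \<inter> I1 e')" using inj_on_image_Int[OF inj_f sub] by simp
    moreover have "f ` I1 e = f ` I1 e' \<longleftrightarrow> I1 e = I1 e'" using inj_on_image_eq_iff[OF inj_f sub] .
    moreover have "g e = g e' \<longleftrightarrow> e = e'" using inj_g e by (auto dest: inj_onD)
    ultimately show ?thesis unfolding dual_bar_adj_def using fg(3) e by auto
  qed
  then show ?thesis unfolding dual_bar_iso_def using fg(2) by blast
qed

lemma mg_iso_two_vertices:
  assumes "multigraph V1 E1 I1" "multigraph V2 E2 I2" "card V1 = 2" "card V2 = 2"
    and "bij_betw g E1 E2"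
  shows "mg_iso V1 E1 I1 V2 E2 I2"
proof -
  have fin: "finite V1" "finite V2" using assms(1,2) unfolding multigraph_def by auto
  obtain f where f: "bij_betw f V1 V2" using finite_same_card_bij[OF fin] assms(3,4) by auto
  have "I1 e = V1" "I2 (g e) = V2" if "e \<in> E1" for e
    using card_subset_eq[OF fin(1)] card_subset_eq[OF fin(2)] bij_betw_apply[OF assms(5) that]
      that assms(1-4) unfolding multigraph_def by auto
  then show ?thesis
    unfolding mg_iso_def using f assms(5) bij_betw_imp_surj_on[OF f] by metis
qed

section \<open>Multigraphs on four vertices\<close>

definition universal_edges :: "'e set \<Rightarrow> ('e \<Rightarrow> 'v set) \<Rightarrow> 'e set" where
  "universal_edges E I = {e \<in> E. \<forall>e'\<in>E. e' \<noteq> e \<longrightarrow> dual_bar_adj I e e'}"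

lemma card_universal_edges_eq:
  assumes "dual_bar_iso E1 I1 E2 I2"
  shows "card (universal_edges E1 I1) = card (universal_edges E2 I2)"
proof -
  obtain g where g: "bij_betw g E1 E2"
    "\<And>e e'. e \<in> E1 \<Longrightarrow> e' \<in> E1 \<Longrightarrow> dual_bar_adj I1 e e' \<longleftrightarrow> dual_bar_adj I2 (g e) (g e')"
    using assms unfolding dual_bar_iso_def by blast
  have inj: "inj_on g E1" and surj: "g ` E1 = E2"
    using g(1) by (simp_all add: bij_betw_imp_inj_on bij_betw_imp_surj_on)
  have "e \<in> universal_edges E1 I1 \<longleftrightarrow> g e \<in> universal_edges E2 I2" if e: "e \<in> E1" for e
  proof -
    have "(\<forall>e'\<in>E1. e' \<noteq> e \<longrightarrow> dual_bar_adj I1 e e') \<longleftrightarrow>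
        (\<forall>e'\<in>E1. g e' \<noteq> g e \<longrightarrow> dual_bar_adj I2 (g e) (g e'))"
      using g(2)[OF e] inj e by (auto dest: inj_onD)
    then show ?thesis
      unfolding universal_edges_def using e bij_betw_apply[OF g(1) e] surj by auto
  qed
  then have "g ` universal_edges E1 I1 = universal_edges E2 I2"
    using surj unfolding universal_edges_def by auto
  moreover have "inj_on g (universal_edges E1 I1)"
    using inj unfolding universal_edges_def by (rule inj_on_subset) auto
  ultimately show ?thesis using card_image by fastforce
qed

definition exA3 :: "nat \<Rightarrow> nat set" where
  "exA3 e = (if e = 0 then {0, 1} else if e = 1 then {0, 1} else if e = 2 then {1, 2} else {2, 3})"

lemma universal_edges_models:
  "universal_edges exE exA1 = {2, 3}" "universal_edges exE exB1 = {1, 2}"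
  "universal_edges exE exA2 = {}" "universal_edges exE exB2 = {}"
  "universal_edges exE exA3 = {2}"
  unfolding universal_edges_def exE_def dual_bar_adj_def exA1_def exB1_def exA2_def exB2_def exA3_def
  by (auto simp: doubleton_eq_iff)

definition index4 :: "'a \<Rightarrow> 'a \<Rightarrow> 'a \<Rightarrow> 'a \<Rightarrow> 'a \<Rightarrow> nat" where
  "index4 a b c d v = (if v = a then 0 else if v = b then 1 else if v = c then 2 else 3)"

lemma index4_simps:
  assumes "distinct [a, b, c, d]"
  shows "index4 a b c d a = 0" "index4 a b c d b = 1" "index4 a b c d c = 2" "index4 a b c d d = 3"
  using assms by (auto simp: index4_def)

lemma bij_betw_index4:
  assumes "distinct [a, b, c, d]"
  shows "bij_betw (index4 a b c d) {a, b, c, d} {0, 1, 2, 3}"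
  unfolding bij_betw_def inj_on_def using index4_simps[OF assms] by auto

lemma mg_iso_exV_exE:
  assumes "distinct [a, b, c, d]" "V = {a, b, c, d}" "distinct [e0, e1, e2, e3]" "E = {e0, e1, e2, e3}"
    and "M 0 = index4 a b c d ` I e0" "M 1 = index4 a b c d ` I e1"
    and "M 2 = index4 a b c d ` I e2" "M 3 = index4 a b c d ` I e3"
  shows "mg_iso V E I exV exE M"
proof -
  have "bij_betw (index4 a b c d) V exV"
    using bij_betw_index4[OF assms(1)] assms(2) by (simp add: exV_def)
  moreover have "bij_betw (index4 e0 e1 e2 e3) E exE"
    using bij_betw_index4[OF assms(3)] assms(4) by (simp add: exE_def)
  moreover have "M (index4 e0 e1 e2 e3 e) = index4 a b c d ` I e" if "e \<in> E" for e
    using that assms(3-8) by (auto simp: index4_def)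
  ultimately show ?thesis unfolding mg_iso_def by blast
qed

context unicyclic_multigraph
begin

lemma endpoints_in_four:
  assumes "e \<in> E" "V = {a, b, c, d}"
  shows "I e = {a, b} \<or> I e = {a, c} \<or> I e = {a, d} \<or> I e = {b, c} \<or> I e = {b, d} \<or> I e = {c, d}"
proof -
  obtain p q where pq: "p \<noteq> q" "I e = {p, q}" using obtain_endpoints[OF assms(1)] .
  have "p \<in> {a, b, c, d}" "q \<in> {a, b, c, d}" using endpoints_subset[OF assms(1)] pq assms(2) by auto
  then show ?thesis using pq by (auto simp: insert_commute)
qed

lemma edges_eq_double_edge_path:
  assumes V: "distinct [a, b, c, d]" "V = {a, b, c, d}"
    and E: "p \<in> E" "p' \<in> E" "s \<in> E" "r \<in> E" "p \<noteq> p'"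
    and I: "I p = {a, b}" "I p' = {a, b}" "I s = {b, c}" "I r = {c, d}"
  shows "E = {p, p', s, r}"
proof
  have C: "is_cycle E I {p, p'}" using V(1) by (intro is_cycle_parallel_pair[OF E(1,2,5) _ I(1,2)]) simp
  have not_in_C: "s \<notin> {p, p'}" "r \<notin> {p, p'}" using I V(1) by (auto simp: doubleton_eq_iff)
  show "E \<subseteq> {p, p', s, r}"
  proof
    fix u assume u: "u \<in> E"
    from endpoints_in_four[OF u V(2)] show "u \<in> {p, p', s, r}"
    proof (elim disjE)
      assume "I u = {a, b}"
      then show ?thesis
        using cycle_eq_parallel_pair[OF C u E(1)] I(1) by (cases "u = p") (auto simp: doubleton_eq_iff)
    next
      assume "I u = {a, c}"
      then have "is_cycle E I {s, u, p}"
        using is_cycle_triangle[OF E(3) u E(1), of b c a] V(1) I by (auto simp: insert_commute)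
      then show ?thesis using cycle_unique[OF C] not_in_C by auto
    next
      assume "I u = {a, d}"
      then have "is_cycle E I {s, r, u, p}"
        using is_cycle_square[OF E(3) E(4) u E(1), of b c d a] V(1) I by (auto simp: insert_commute)
      then show ?thesis using cycle_unique[OF C] not_in_C by auto
    next
      assume "I u = {b, c}"
      then show ?thesis using parallel_edge_eq[OF C u E(3) _ disjI1[OF not_in_C(1)]] I by auto
    next
      assume "I u = {b, d}"
      then have "is_cycle E I {s, r, u}"
        using is_cycle_triangle[OF E(3) E(4) u, of b c d] V(1) I by (auto simp: insert_commute)
      then show ?thesis using cycle_unique[OF C] not_in_C by auto
    next
      assume "I u = {c, d}"
      then show ?thesis using parallel_edge_eq[OF C u E(4) _ disjI1[OF not_in_C(2)]] I by auto
    qed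
  qed
qed (use E in auto)

lemma edges_eq_double_edge_pendants:
  assumes V: "distinct [a, b, c, d]" "V = {a, b, c, d}"
    and E: "p \<in> E" "p' \<in> E" "s \<in> E" "t \<in> E" "p \<noteq> p'"
    and I: "I p = {a, b}" "I p' = {a, b}" "I s = {a, c}" "I t = {y, d}" "y \<in> {a, b}"
    and no_cd: "\<And>e. e \<in> E \<Longrightarrow> I e \<noteq> {c, d}"
  shows "E = {p, p', s, t}"
proof
  have C: "is_cycle E I {p, p'}" using V(1) by (intro is_cycle_parallel_pair[OF E(1,2,5) _ I(1,2)]) simp
  have not_in_C: "s \<notin> {p, p'}" "t \<notin> {p, p'}" using I V(1) by (auto simp: doubleton_eq_iff)
  show "E \<subseteq> {p, p', s, t}"
  proof
    fix u assume u: "u \<in> E"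
    from endpoints_in_four[OF u V(2)] show "u \<in> {p, p', s, t}"
    proof (elim disjE)
      assume "I u = {a, b}"
      then show ?thesis
        using cycle_eq_parallel_pair[OF C u E(1)] I(1) by (cases "u = p") (auto simp: doubleton_eq_iff)
    next
      assume "I u = {a, c}"
      then show ?thesis using parallel_edge_eq[OF C u E(3) _ disjI1[OF not_in_C(1)]] I by auto
    next
      assume u_ad: "I u = {a, d}"
      show ?thesis
      proof (cases "y = a")
        case True
        then show ?thesis using parallel_edge_eq[OF C u E(4) _ disjI1[OF not_in_C(2)]] I u_ad by auto
      next
        case False
        then have "is_cycle E I {t, u, p}"
          using is_cycle_triangle[OF E(4) u E(1), of b d a] V(1) I u_ad by (auto simp: insert_commute)
        then show ?thesis using cycle_unique[OF C] not_in_C by auto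
      qed
    next
      assume "I u = {b, c}"
      then have "is_cycle E I {s, u, p}"
        using is_cycle_triangle[OF E(3) u E(1), of a c b] V(1) I by (auto simp: insert_commute)
      then show ?thesis using cycle_unique[OF C] not_in_C by auto
    next
      assume u_bd: "I u = {b, d}"
      show ?thesis
      proof (cases "y = b")
        case True
        then show ?thesis using parallel_edge_eq[OF C u E(4) _ disjI1[OF not_in_C(2)]] I u_bd by auto
      next
        case False
        then have "is_cycle E I {t, u, p}"
          using is_cycle_triangle[OF E(4) u E(1), of a d b] V(1) I u_bd by (auto simp: insert_commute)
        then show ?thesis using cycle_unique[OF C] not_in_C by auto
      qed
    next
      assume "I u = {c, d}"
      then show ?thesis using no_cd[OF u] by blast
    qed
  qed
qed (use E in auto)

lemma edges_eq_paw:
  assumes V: "distinct [a, b, c, d]" "V = {a, b, c, d}"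
    and E: "x \<in> E" "y \<in> E" "z \<in> E" "e \<in> E"
    and I: "I x = {a, b}" "I y = {b, c}" "I z = {c, a}" "I e = {c, d}"
  shows "E = {x, y, z, e}"
proof
  have C: "is_cycle E I {x, y, z}" using is_cycle_triangle[OF E(1-3) _ I(1-3)] V(1) by simp
  have distinct: "distinct [x, y, z, e]" using I V(1) by (auto simp: doubleton_eq_iff)
  have card_C: "card {x, y, z} \<noteq> 2" using distinct by simp
  show "E \<subseteq> {x, y, z, e}"
  proof
    fix u assume u: "u \<in> E"
    from endpoints_in_four[OF u V(2)] show "u \<in> {x, y, z, e}"
    proof (elim disjE)
      assume "I u = {a, b}"
      then show ?thesis using parallel_edge_eq[OF C u E(1) _ disjI2[OF card_C]] I by auto
    next
      assume "I u = {a, c}"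
      then show ?thesis using parallel_edge_eq[OF C u E(3) _ disjI2[OF card_C]] I by (auto simp: insert_commute)
    next
      assume "I u = {a, d}"
      then have "is_cycle E I {u, e, z}"
        using is_cycle_triangle[OF u E(4) E(3), of a d c] V(1) I by (auto simp: insert_commute)
      then have "x \<in> {u, e, z}" using cycle_unique[OF C] by blast
      then show ?thesis using distinct by auto
    next
      assume "I u = {b, c}"
      then show ?thesis using parallel_edge_eq[OF C u E(2) _ disjI2[OF card_C]] I by auto
    next
      assume "I u = {b, d}"
      then have "is_cycle E I {u, e, y}"
        using is_cycle_triangle[OF u E(4) E(2), of b d c] V(1) I by (auto simp: insert_commute)
      then have "x \<in> {u, e, y}" using cycle_unique[OF C] by blast
      then show ?thesis using distinct by auto
    next
      assume "I u = {c, d}"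
      then show ?thesis using parallel_edge_eq[OF C u E(4) _ disjI2[OF card_C]] I by auto
    qed
  qed
qed (use E in auto)

lemma edges_eq_square:
  assumes V: "distinct [a, b, c, d]" "V = {a, b, c, d}"
    and E: "x \<in> E" "y \<in> E" "z \<in> E" "w \<in> E"
    and I: "I x = {a, b}" "I y = {b, c}" "I z = {c, d}" "I w = {d, a}"
  shows "E = {x, y, z, w}"
proof
  have C: "is_cycle E I {x, y, z, w}" using is_cycle_square[OF E V(1) I] .
  have distinct: "distinct [x, y, z, w]" using I V(1) by (auto simp: doubleton_eq_iff)
  have card_C: "card {x, y, z, w} \<noteq> 2" using distinct by simp
  show "E \<subseteq> {x, y, z, w}"
  proof
    fix u assume u: "u \<in> E"
    from endpoints_in_four[OF u V(2)] show "u \<in> {x, y, z, w}"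
    proof (elim disjE)
      assume "I u = {a, b}"
      then show ?thesis using parallel_edge_eq[OF C u E(1) _ disjI2[OF card_C]] I by auto
    next
      assume "I u = {a, c}"
      then have "is_cycle E I {x, y, u}"
        using is_cycle_triangle[OF E(1) E(2) u, of a b c] V(1) I by (auto simp: insert_commute)
      then have "z \<in> {x, y, u}" using cycle_unique[OF C] by blast
      then show ?thesis using distinct by auto
    next
      assume "I u = {a, d}"
      then show ?thesis using parallel_edge_eq[OF C u E(4) _ disjI2[OF card_C]] I by (auto simp: insert_commute)
    next
      assume "I u = {b, c}"
      then show ?thesis using parallel_edge_eq[OF C u E(2) _ disjI2[OF card_C]] I by auto
    next
      assume "I u = {b, d}"
      then have "is_cycle E I {y, z, u}"
        using is_cycle_triangle[OF E(2) E(3) u, of b c d] V(1) I by (auto simp: insert_commute)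
      then have "x \<in> {y, z, u}" using cycle_unique[OF C] by blast
      then show ?thesis using distinct by auto
    next
      assume "I u = {c, d}"
      then show ?thesis using parallel_edge_eq[OF C u E(3) _ disjI2[OF card_C]] I by auto
    qed
  qed
qed (use E in auto)

lemma iso_exA3:
  assumes V: "distinct [a, b, c, d]" "V = {a, b, c, d}"
    and E: "p \<in> E" "p' \<in> E" "s \<in> E" "r \<in> E" "p \<noteq> p'"
    and I: "I p = {a, b}" "I p' = {a, b}" "I s = {b, c}" "I r = {c, d}"
  shows "mg_iso V E I exV exE exA3"
proof -
  have "distinct [p, p', s, r]" using I V(1) E(5) by (auto simp: doubleton_eq_iff)
  then show ?thesis
    by (rule mg_iso_exV_exE[OF V _ edges_eq_double_edge_path[OF V E I]])
      (use I V(1) in \<open>simp_all add: index4_simps[OF V(1)] exA3_def\<close>)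
qed

lemma iso_exA1:
  assumes V: "distinct [a, b, c, d]" "V = {a, b, c, d}"
    and E: "p \<in> E" "p' \<in> E" "s \<in> E" "t \<in> E" "p \<noteq> p'"
    and I: "I p = {a, b}" "I p' = {a, b}" "I s = {a, c}" "I t = {a, d}"
    and no_cd: "\<And>e. e \<in> E \<Longrightarrow> I e \<noteq> {c, d}"
  shows "mg_iso V E I exV exE exA1"
proof -
  have "distinct [p, p', s, t]" using I V(1) E(5) by (auto simp: doubleton_eq_iff)
  then show ?thesis
    by (rule mg_iso_exV_exE[OF V _ edges_eq_double_edge_pendants[OF V E I _ no_cd]])
      (use I V(1) in \<open>simp_all add: index4_simps[OF V(1)] exA1_def\<close>)
qed

lemma iso_exA2:
  assumes V: "distinct [a, b, c, d]" "V = {a, b, c, d}"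
    and E: "p \<in> E" "p' \<in> E" "s \<in> E" "t \<in> E" "p \<noteq> p'"
    and I: "I p = {a, b}" "I p' = {a, b}" "I s = {a, c}" "I t = {b, d}"
    and no_cd: "\<And>e. e \<in> E \<Longrightarrow> I e \<noteq> {c, d}"
  shows "mg_iso V E I exV exE exA2"
proof -
  have "distinct [p, p', s, t]" using I V(1) E(5) by (auto simp: doubleton_eq_iff)
  then show ?thesis
    by (rule mg_iso_exV_exE[OF V _ edges_eq_double_edge_pendants[OF V E I _ no_cd]])
      (use I V(1) in \<open>simp_all add: index4_simps[OF V(1)] exA2_def\<close>)
qed

lemma iso_exB1:
  assumes V: "distinct [a, b, c, d]" "V = {a, b, c, d}"
    and E: "x \<in> E" "y \<in> E" "z \<in> E" "e \<in> E"
    and I: "I x = {a, b}" "I y = {b, c}" "I z = {c, a}" "I e = {c, d}"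
  shows "mg_iso V E I exV exE exB1"
proof -
  have "distinct [x, y, z, e]" using I V(1) by (auto simp: doubleton_eq_iff)
  then show ?thesis
    by (rule mg_iso_exV_exE[OF V _ edges_eq_paw[OF V E I]])
      (use I V(1) in \<open>simp_all add: index4_simps[OF V(1)] exB1_def insert_commute\<close>)
qed

lemma iso_exB2:
  assumes V: "distinct [a, b, c, d]" "V = {a, b, c, d}"
    and E: "x \<in> E" "y \<in> E" "z \<in> E" "w \<in> E"
    and I: "I x = {a, b}" "I y = {b, c}" "I z = {c, d}" "I w = {d, a}"
  shows "mg_iso V E I exV exE exB2"
proof -
  have "distinct [x, y, z, w]" using I V(1) by (auto simp: doubleton_eq_iff)
  then show ?thesis
    by (rule mg_iso_exV_exE[OF V _ edges_eq_square[OF V E I]])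
      (use I V(1) in \<open>simp_all add: index4_simps[OF V(1)] exB2_def\<close>)
qed

lemma four_vertex_parallel_with_opposite_edge:
  assumes V: "distinct [a, b, c, d]" "V = {a, b, c, d}"
    and E: "p \<in> E" "p' \<in> E" "r \<in> E" "p \<noteq> p'"
    and I: "I p = {a, b}" "I p' = {a, b}" "I r = {c, d}"
  shows "mg_iso V E I exV exE exA3"
proof -
  obtain s \<gamma> \<alpha> where s: "s \<in> E" "I s = {\<gamma>, \<alpha>}" "\<gamma> \<in> {c, d}" "\<alpha> \<notin> {c, d}"
    using obtain_edge_leaving[of c "{c, d}"] V by auto
  then have "\<alpha> \<in> {a, b}" using endpoints_subset[OF s(1)] V(2) by auto
  then obtain \<beta> where \<beta>: "{a, b} = {\<beta>, \<alpha>}" by (rule obtain_doubleton_other)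
  obtain \<delta> where \<delta>: "{c, d} = {\<gamma>, \<delta>}" using s(3) obtain_doubleton_other by (metis insert_commute)
  have V': "V = {\<beta>, \<alpha>, \<gamma>, \<delta>}" using V(2) \<beta> \<delta> by auto
  then have "distinct [\<beta>, \<alpha>, \<gamma>, \<delta>]"
    using V distinct_card[of "[a, b, c, d]"] by (intro card_distinct) simp
  then show ?thesis
    using iso_exA3[OF _ V' E(1,2) s(1) E(3,4)] I \<beta> \<delta> s(2) by (simp add: insert_commute)
qed

lemma four_vertex_with_parallel:
  assumes "card V = 4" "p \<in> E" "p' \<in> E" "p \<noteq> p'" "I p = I p'"
  shows "mg_iso V E I exV exE exA1 \<or> mg_iso V E I exV exE exA2 \<or> mg_iso V E I exV exE exA3"
proof -
  obtain a b where ab: "a \<noteq> b" "I p = {a, b}" using obtain_endpoints[OF assms(2)] .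
  have "{a, b} \<subseteq> V" using endpoints_subset[OF assms(2)] ab by auto
  then have "card (V - {a, b}) = 2" using assms(1) ab finite_V by (simp add: card_Diff_subset)
  then obtain c d where cd: "c \<noteq> d" "V - {a, b} = {c, d}" by (meson card_2_iff)
  have V: "distinct [a, b, c, d]" "V = {a, b, c, d}" using cd ab \<open>{a, b} \<subseteq> V\<close> by auto
  show ?thesis
  proof (cases "\<exists>r\<in>E. I r = {c, d}")
    case True
    then obtain r where "r \<in> E" "I r = {c, d}" by blast
    then show ?thesis
      using four_vertex_parallel_with_opposite_edge[OF V assms(2,3) _ assms(4)] ab assms(5) by simp
  next
    case False
    then have no_cd: "\<And>e. e \<in> E \<Longrightarrow> I e \<noteq> {c, d}" by blast
    have "card V \<ge> 2" using assms(1) by simp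
    obtain s \<alpha> where s: "s \<in> E" "\<alpha> \<noteq> c" "I s = {c, \<alpha>}" "\<alpha> \<in> V"
      using obtain_edge_at[OF \<open>card V \<ge> 2\<close>, of c] V(2) by auto
    obtain t \<alpha>' where t: "t \<in> E" "\<alpha>' \<noteq> d" "I t = {d, \<alpha>'}" "\<alpha>' \<in> V"
      using obtain_edge_at[OF \<open>card V \<ge> 2\<close>, of d] V(2) by auto
    have "\<alpha> \<noteq> d" "\<alpha>' \<noteq> c" using no_cd[OF s(1)] no_cd[OF t(1)] s(3) t(3) by (auto simp: insert_commute)
    then have "\<alpha> \<in> {a, b}" "\<alpha>' \<in> {a, b}" using s t V(2) by auto
    then obtain \<beta> where \<beta>: "{a, b} = {\<alpha>, \<beta>}" using obtain_doubleton_other by (metis insert_commute)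
    have V': "V = {\<alpha>, \<beta>, c, d}" using V(2) \<beta> by auto
    then have "distinct [\<alpha>, \<beta>, c, d]"
      using V distinct_card[of "[a, b, c, d]"] by (intro card_distinct) simp
    moreover have "I p = {\<alpha>, \<beta>}" "I p' = {\<alpha>, \<beta>}" "I s = {\<alpha>, c}" using ab assms(5) \<beta> s(3) by auto
    moreover have "I t = {\<alpha>, d} \<or> I t = {\<beta>, d}" using t(3) \<open>\<alpha>' \<in> {a, b}\<close> \<beta> by auto
    ultimately show ?thesis
      using iso_exA1[OF _ V' assms(2,3) s(1) t(1) assms(4)] iso_exA2[OF _ V' assms(2,3) s(1) t(1) assms(4)]
        no_cd by blast
  qed
qed

lemma four_vertex_triangle:
  assumes "card V = 4" "x \<in> E" "y \<in> E" "z \<in> E" "distinct [a, b, c]"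
    and I: "I x = {a, b}" "I y = {b, c}" "I z = {c, a}"
  shows "mg_iso V E I exV exE exB1"
proof -
  have abc: "{a, b, c} \<subseteq> V" using endpoints_subset assms(2-4) I by auto
  then have "card (V - {a, b, c}) = 1" using assms(1,5) finite_V by (simp add: card_Diff_subset)
  then obtain d where "V - {a, b, c} = {d}" by (meson card_1_singletonE)
  then have V: "distinct [a, b, c, d]" "V = {a, b, c, d}" using assms(5) abc by auto
  have "card V \<ge> 2" using assms(1) by simp
  then obtain e u where e: "e \<in> E" "u \<noteq> d" "I e = {d, u}" "u \<in> V"
    using obtain_edge_at[of d] V(2) by auto
  then consider "u = c" | "u = a" | "u = b" using V(2) by auto
  then show ?thesis
  proof cases
    case 1
    then show ?thesis using iso_exB1[OF V assms(2-4) e(1) I] e(3) by (simp add: insert_commute)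
  next
    case 2
    have "distinct [b, c, a, d]" "V = {b, c, a, d}" using V by auto
    moreover have "I e = {a, d}" using e(3) 2 by (simp add: insert_commute)
    ultimately show ?thesis using iso_exB1[of b c a d y z x e] assms(2-4) e(1) I by simp
  next
    case 3
    have "distinct [c, a, b, d]" "V = {c, a, b, d}" using V by auto
    moreover have "I e = {b, d}" using e(3) 3 by (simp add: insert_commute)
    ultimately show ?thesis using iso_exB1[of c a b d z x y e] assms(2-4) e(1) I by simp
  qed
qed

lemma four_vertex_square:
  assumes "card V = 4"
    and simple: "\<And>e e'. e \<in> E \<Longrightarrow> e' \<in> E \<Longrightarrow> e \<noteq> e' \<Longrightarrow> I e \<noteq> I e'"
    and C: "is_cycle E I C" "x \<in> C" "y \<in> C" "z \<in> C"
    and distinct: "distinct [a, b, d, c]" and I: "I x = {a, b}" "I y = {a, c}" "I z = {b, d}"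
  shows "mg_iso V E I exV exE exB2"
proof -
  have CE: "C \<subseteq> E" using C(1) unfolding is_cycle_def by blast
  have "{a, b, d, c} \<subseteq> V"
    using endpoints_subset[of x] endpoints_subset[of y] endpoints_subset[of z] CE C(2-4) I by auto
  moreover have "card {a, b, d, c} = card V" using distinct_card[OF distinct] assms(1) by simp
  ultimately have V: "V = {a, b, d, c}" using card_subset_eq[OF finite_V] by blast
  obtain w where w: "w \<in> C" "w \<noteq> y" "c \<in> I w" using is_cycle_other_edge_at[OF C(1,3)] I(2) by auto
  obtain t where t: "t \<noteq> c" "I w = {c, t}" using obtain_other_endpoint CE w by blast
  have "t \<noteq> a" using simple[of w y] CE w C(3) I(2) t by (auto simp: insert_commute)
  moreover have "t \<noteq> b"
  proof
    assume "t = b"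
    then have "distinct [x, z, w]" using I t distinct by (auto simp: doubleton_eq_iff)
    then show False using is_cycle_no_three_edges_at[OF C(1,2,4) w(1)] I t \<open>t = b\<close> by auto
  qed
  moreover have "t \<in> V" using endpoints_subset CE w t by blast
  ultimately have "t = d" using V t by auto
  then have "I w = {d, c}" using t by (simp add: insert_commute)
  then show ?thesis
    using iso_exB2[OF distinct V, of x z w y] CE C(2-4) w(1) I by (auto simp: insert_commute)
qed

lemma four_vertex_without_parallel:
  assumes "card V = 4"
    and simple: "\<And>e e'. e \<in> E \<Longrightarrow> e' \<in> E \<Longrightarrow> e \<noteq> e' \<Longrightarrow> I e \<noteq> I e'"
  shows "mg_iso V E I exV exE exB1 \<or> mg_iso V E I exV exE exB2"
proof -
  obtain C where C: "is_cycle E I C" using unique_cycle unfolding unique_cycle_def by blast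
  then have CE: "C \<subseteq> E" unfolding is_cycle_def by blast
  obtain x where x: "x \<in> C" using C unfolding is_cycle_def by blast
  obtain a b where ab: "a \<noteq> b" "I x = {a, b}" using obtain_endpoints CE x by blast
  obtain y where y: "y \<in> C" "y \<noteq> x" "a \<in> I y" using is_cycle_other_edge_at[OF C x] ab by auto
  obtain c where c: "c \<noteq> a" "I y = {a, c}" using obtain_other_endpoint CE y by blast
  obtain z where z: "z \<in> C" "z \<noteq> x" "b \<in> I z" using is_cycle_other_edge_at[OF C x] ab by auto
  obtain d where d: "d \<noteq> b" "I z = {b, d}" using obtain_other_endpoint CE z by blast
  have "c \<noteq> b" "d \<noteq> a"
    using simple[of y x] simple[of z x] CE x y z ab c d by (auto simp: insert_commute)
  show ?thesis
  proof (cases "d = c")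
    case True
    then have "mg_iso V E I exV exE exB1"
      using four_vertex_triangle[OF assms(1), of x z y a b c] CE x y z ab c d \<open>c \<noteq> b\<close>
      by (auto simp: insert_commute)
    then show ?thesis by blast
  next
    case False
    then have "distinct [a, b, d, c]" using ab c d \<open>c \<noteq> b\<close> \<open>d \<noteq> a\<close> by auto
    then show ?thesis using four_vertex_square[OF assms C x y(1) z(1) _ ab(2) c(2) d(2)] by blast
  qed
qed

lemma four_vertex_classification:
  assumes "card V = 4"
  obtains M where "M \<in> {exA1, exA2, exA3, exB1, exB2}" "mg_iso V E I exV exE M"
proof (cases "\<exists>p\<in>E. \<exists>p'\<in>E. p \<noteq> p' \<and> I p = I p'")
  case True
  then obtain p p' where "p \<in> E" "p' \<in> E" "p \<noteq> p'" "I p = I p'" by blast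
  then show thesis using four_vertex_with_parallel[OF assms] that by blast
next
  case False
  then show thesis using four_vertex_without_parallel[OF assms] that by blast
qed

end

lemma four_vertex_models_with_equal_invariant:
  assumes "M1 \<in> {exA1, exA2, exA3, exB1, exB2}" "M2 \<in> {exA1, exA2, exA3, exB1, exB2}"
    and "card (universal_edges exE M1) = card (universal_edges exE M2)"
  shows "M1 = M2 \<or> (M1 = exA1 \<and> M2 = exB1) \<or> (M1 = exB1 \<and> M2 = exA1)
    \<or> (M1 = exA2 \<and> M2 = exB2) \<or> (M1 = exB2 \<and> M2 = exA2)"
  using assms by (auto simp: universal_edges_models)

lemma four_vertex_dual_bar_iso:
  assumes "unicyclic_multigraph V1 E1 I1" "unicyclic_multigraph V2 E2 I2"
    and "card V1 = 4" "card V2 = 4" "dual_bar_iso E1 I1 E2 I2"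
  shows "mg_iso V1 E1 I1 V2 E2 I2
    \<or> (mg_iso V1 E1 I1 exV exE exA1 \<and> mg_iso V2 E2 I2 exV exE exB1)
    \<or> (mg_iso V1 E1 I1 exV exE exB1 \<and> mg_iso V2 E2 I2 exV exE exA1)
    \<or> (mg_iso V1 E1 I1 exV exE exA2 \<and> mg_iso V2 E2 I2 exV exE exB2)
    \<or> (mg_iso V1 E1 I1 exV exE exB2 \<and> mg_iso V2 E2 I2 exV exE exA2)"
proof -
  interpret G1: unicyclic_multigraph V1 E1 I1 by (rule assms(1))
  interpret G2: unicyclic_multigraph V2 E2 I2 by (rule assms(2))
  obtain M1 where M1: "M1 \<in> {exA1, exA2, exA3, exB1, exB2}" "mg_iso V1 E1 I1 exV exE M1"
    using G1.four_vertex_classification[OF assms(3)] .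
  obtain M2 where M2: "M2 \<in> {exA1, exA2, exA3, exB1, exB2}" "mg_iso V2 E2 I2 exV exE M2"
    using G2.four_vertex_classification[OF assms(4)] .
  have "card (universal_edges exE M1) = card (universal_edges exE M2)"
    using card_universal_edges_eq[OF mg_iso_imp_dual_bar_iso[OF G1.multigraph M1(2)]]
      card_universal_edges_eq[OF mg_iso_imp_dual_bar_iso[OF G2.multigraph M2(2)]]
      card_universal_edges_eq[OF assms(5)] by simp
  moreover have "mg_iso V1 E1 I1 V2 E2 I2" if "M1 = M2"
    using mg_iso_trans[OF M1(2)[unfolded that] mg_iso_sym[OF G2.multigraph M2(2)]] .
  ultimately show ?thesis
    using four_vertex_models_with_equal_invariant[OF M1(1) M2(1)] M1(2) M2(2) by blast
qed

theorem lemma7: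
  fixes V1 :: "'v1 set" and E1 :: "'e1 set" and I1 :: "'e1 \<Rightarrow> 'v1 set"
    and V2 :: "'v2 set" and E2 :: "'e2 set" and I2 :: "'e2 \<Rightarrow> 'v2 set"
    and n :: nat
  assumes "multigraph V1 E1 I1" and "multigraph V2 E2 I2"
    and "mg_connected V1 E1 I1" and "mg_connected V2 E2 I2"
    and "card V1 = n" and "card V2 = n"
    and "unique_cycle E1 I1" and "unique_cycle E2 I2"
    and "dual_bar_iso E1 I1 E2 I2"
  shows "mg_iso V1 E1 I1 V2 E2 I2
    \<or> (mg_iso V1 E1 I1 exV exE exA1 \<and> mg_iso V2 E2 I2 exV exE exB1)
    \<or> (mg_iso V1 E1 I1 exV exE exB1 \<and> mg_iso V2 E2 I2 exV exE exA1)
    \<or> (mg_iso V1 E1 I1 exV exE exA2 \<and> mg_iso V2 E2 I2 exV exE exB2)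
    \<or> (mg_iso V1 E1 I1 exV exE exB2 \<and> mg_iso V2 E2 I2 exV exE exA2)"
proof -
  have G1: "unicyclic_multigraph V1 E1 I1" and G2: "unicyclic_multigraph V2 E2 I2"
    using assms by (simp_all add: unicyclic_multigraph_def unicyclic_multigraph_axioms_def
        connected_multigraph_def)
  obtain g where g: "bij_betw g E1 E2"
    "\<And>e e'. e \<in> E1 \<Longrightarrow> e' \<in> E1 \<Longrightarrow> dual_bar_adj I1 e e' \<longleftrightarrow> dual_bar_adj I2 (g e) (g e')"
    using assms(9) unfolding dual_bar_iso_def by blast
  have "n \<ge> 2" using unicyclic_multigraph.card_V_ge_2[OF G1] assms(5) by simp
  then consider "n = 2" | "n = 4" | "n \<ge> 3" "n \<noteq> 4" by linarith
  then show ?thesis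
  proof cases
    case 1
    then show ?thesis using mg_iso_two_vertices[OF assms(1,2) _ _ g(1)] assms(5,6) by simp
  next
    case 2
    then show ?thesis using four_vertex_dual_bar_iso[OF G1 G2 _ _ assms(9)] assms(5,6) by simp
  next
    case 3
    have "unicyclic_dual_iso V1 E1 I1 V2 E2 I2 g"
      using G1 G2 g assms(5,6) 3 by (simp add: unicyclic_dual_iso_def unicyclic_dual_iso_axioms_def)
    then show ?thesis using unicyclic_dual_iso.mg_iso by blast
  qed
qed

end
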